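(* Let $V$ be a commutative unital quantale whose underlying lattice is a frame. A $V$-homomorphism $f\colon(X,a,+)\to(Y,b,+)$ between $V$-groups is open if and only if it is proper.
   Context: A commutative unital quantale $V$ is a complete lattice with a commutative associative operation $\otimes$ with unit $k$ preserving arbitrary joins in each variable. A $V$-category $(X,a)$: $a\colon X\times X\to V$ with $k\le a(x,x)$ and $a(x,x')\otimes a(x',x'')\le a(x,x'')$. A $V$-group $(X,a,+)$ is a $V$-category with a group structure (additive, not necessarily abelian) such that $a(x_1,x_2)\otimes a(x_1',x_2')\le a(x_1+x_1',x_2+x_2')$; a $V$-homomorphism is a group homomorphism with $a(x,x')\le b(f(x),f(x'))$. A $V$-functor $f\colon(X,a)\to(Y,b)$ is proper if $b(f(x),y)=\bigvee\{a(x,x')\mid x'\in X,\ f(x')=y\}$ for all $x\in X$, $y\in Y$, and open if $b(y,f(x))=\bigvee\{a(x',x)\mid x'\in X,\ f(x')=y\}$ for all $x\in X$, $y\in Y$ (empty joins being $\bot$). *)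

theory Defs
  imports Main
begin

definition comm_unital_quantale :: "('v::complete_lattice \<Rightarrow> 'v \<Rightarrow> 'v) \<Rightarrow> 'v \<Rightarrow> bool" where
  "comm_unital_quantale tn k \<longleftrightarrow>
     (\<forall>u v w. tn (tn u v) w = tn u (tn v w)) \<and>
     (\<forall>u v. tn u v = tn v u) \<and>
     (\<forall>u. tn k u = u \<and> tn u k = u) \<and>
     (\<forall>u S. tn u (Sup S) = Sup ((\<lambda>s. tn u s) ` S)) \<and>
     (\<forall>u S. tn (Sup S) u = Sup ((\<lambda>s. tn s u) ` S))"

definition is_frame :: "'v::complete_lattice itself \<Rightarrow> bool" where
  "is_frame _ \<longleftrightarrow> (\<forall>(u::'v) S. inf u (Sup S) = Sup ((\<lambda>s. inf u s) ` S))"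

definition V_category :: "('v::complete_lattice \<Rightarrow> 'v \<Rightarrow> 'v) \<Rightarrow> 'v \<Rightarrow> ('x \<Rightarrow> 'x \<Rightarrow> 'v) \<Rightarrow> bool" where
  "V_category tn k a \<longleftrightarrow>
     (\<forall>x. k \<le> a x x) \<and> (\<forall>x x' x''. tn (a x x') (a x' x'') \<le> a x x'')"

text \<open>A V-group: the group structure is the (not necessarily abelian) additive group of the type 'x.\<close>
definition V_group :: "('v::complete_lattice \<Rightarrow> 'v \<Rightarrow> 'v) \<Rightarrow> 'v \<Rightarrow> ('x::group_add \<Rightarrow> 'x \<Rightarrow> 'v) \<Rightarrow> bool" where
  "V_group tn k a \<longleftrightarrow> V_category tn k a \<and>
     (\<forall>x1 x2 x1' x2'. tn (a x1 x2) (a x1' x2') \<le> a (x1 + x1') (x2 + x2'))"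

definition V_homomorphism ::
  "('x::group_add \<Rightarrow> 'x \<Rightarrow> 'v::complete_lattice) \<Rightarrow> ('y::group_add \<Rightarrow> 'y \<Rightarrow> 'v) \<Rightarrow> ('x \<Rightarrow> 'y) \<Rightarrow> bool" where
  "V_homomorphism a b f \<longleftrightarrow>
     (\<forall>x x'. f (x + x') = f x + f x') \<and> (\<forall>x x'. a x x' \<le> b (f x) (f x'))"

definition V_proper :: "('x \<Rightarrow> 'x \<Rightarrow> 'v::complete_lattice) \<Rightarrow> ('y \<Rightarrow> 'y \<Rightarrow> 'v) \<Rightarrow> ('x \<Rightarrow> 'y) \<Rightarrow> bool" where
  "V_proper a b f \<longleftrightarrow> (\<forall>x y. b (f x) y = Sup {a x x' | x'. f x' = y})"

definition V_open :: "('x \<Rightarrow> 'x \<Rightarrow> 'v::complete_lattice) \<Rightarrow> ('y \<Rightarrow> 'y \<Rightarrow> 'v) \<Rightarrow> ('x \<Rightarrow> 'y) \<Rightarrow> bool" where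
  "V_open a b f \<longleftrightarrow> (\<forall>x y. b y (f x) = Sup {a x' x | x'. f x' = y})"

end

theory Submission
  imports Defs
begin

text \<open>In a \<open>V\<close>-group inversion is an anti-isomorphism: \<open>a x x' = a (-x') (-x)\<close>, obtained by
  adding \<open>-x\<close> on the left and \<open>-x'\<close> on the right. A homomorphism commutes with inversion, so
  reindexing the fibre \<open>f\<^sup>-\<^sup>1(y)\<close> by \<open>x' \<mapsto> -x'\<close> turns the join defining properness into the one
  defining openness. Passing to the converse structures exchanges the two notions, so one
  implication suffices.\<close>

lemma quantale_tensor_mono:
  assumes q: "comm_unital_quantale tn k" and "u \<le> u'" and "v \<le> v'"
  shows "tn u v \<le> tn u' v'"
proof -
  have right_mono: "tn u v \<le> tn u v'" if "v \<le> v'" for u v v'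
  proof -
    have "tn u (Sup {v, v'}) = Sup (tn u ` {v, v'})"
      using q unfolding comm_unital_quantale_def by blast
    then show ?thesis
      using that by (simp add: sup_absorb2 le_iff_sup)
  qed
  have "tn u v = tn v u" for u v
    using q unfolding comm_unital_quantale_def by blast
  then show ?thesis
    using right_mono[OF assms(2), of v] right_mono[OF assms(3), of u'] by (metis order_trans)
qed

lemma V_group_le_minus_swap:
  assumes q: "comm_unital_quantale tn k" and g: "V_group tn k a"
  shows "a x x' \<le> a (- x') (- (x::'x::group_add))"
proof -
  have unit: "tn k u = u" "tn u k = u" for u
    using q unfolding comm_unital_quantale_def by auto
  have refl: "k \<le> a z z" for z
    using g unfolding V_group_def V_category_def by blast
  have add: "tn (a x1 x2) (a x1' x2') \<le> a (x1 + x1') (x2 + x2')" for x1 x2 x1' x2'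
    using g unfolding V_group_def by blast
  have "a x x' = tn (tn k (a x x')) k"
    by (simp add: unit)
  also have "\<dots> \<le> tn (tn (a (-x) (-x)) (a x x')) (a (-x') (-x'))"
    using quantale_tensor_mono[OF q] refl by (meson order_refl)
  also have "\<dots> \<le> tn (a (-x + x) (-x + x')) (a (-x') (-x'))"
    using quantale_tensor_mono[OF q] add by (meson order_refl)
  also have "\<dots> \<le> a (-x + x + -x') (-x + x' + -x')"
    by (rule add)
  finally show ?thesis
    by (simp add: add.assoc)
qed

lemma V_group_minus_swap:
  assumes "comm_unital_quantale tn k" and "V_group tn k a"
  shows "a x x' = a (- x') (- (x::'x::group_add))"
  using V_group_le_minus_swap[OF assms, of x x'] V_group_le_minus_swap[OF assms, of "-x'" "-x"]
  by simp

lemma additive_minus: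
  fixes f :: "'x::group_add \<Rightarrow> 'y::group_add"
  assumes "\<And>x x'. f (x + x') = f x + f x'"
  shows "f (- x) = - f x"
proof -
  have "f 0 + 0 = f 0 + f 0"
    using assms[of 0 0] by simp
  then have "f 0 = 0"
    by (simp only: add_left_cancel)
  then have "f (- x) + f x = 0"
    using assms[of "-x" x] by simp
  then show ?thesis
    by (simp add: eq_neg_iff_add_eq_0)
qed

lemma V_open_iff_V_proper_converse:
  "V_open a b f \<longleftrightarrow> V_proper (\<lambda>x x'. a x' x) (\<lambda>y y'. b y' y) f"
  by (simp add: V_open_def V_proper_def)

lemma V_open_if_V_proper_minus_swap:
  fixes a :: "'x::group_add \<Rightarrow> 'x \<Rightarrow> 'v::complete_lattice" and b :: "'y::group_add \<Rightarrow> 'y \<Rightarrow> 'v"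
  assumes a_swap: "\<And>x x'. a x x' = a (- x') (- x)"
    and b_swap: "\<And>y y'. b y y' = b (- y') (- y)"
    and f_minus: "\<And>x. f (- x) = - f x"
    and "V_proper a b f"
  shows "V_open a b f"
  unfolding V_open_def
proof (intro allI)
  fix x y
  have fibre: "{a (- x') x | x'. f x' = - y} = {a x' x | x'. f x' = y}"
  proof (intro set_eqI iffI)
    fix t assume "t \<in> {a (- x') x | x'. f x' = - y}"
    then obtain x' where "t = a (- x') x" "f x' = - y" by blast
    then show "t \<in> {a x' x | x'. f x' = y}"
      by (auto intro!: exI[of _ "- x'"] simp: f_minus)
  next
    fix t assume "t \<in> {a x' x | x'. f x' = y}"
    then obtain x' where "t = a x' x" "f x' = y" by blast
    then show "t \<in> {a (- x') x | x'. f x' = - y}"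
      by (auto intro!: exI[of _ "- x'"] simp: f_minus)
  qed
  have "b y (f x) = b (f (- x)) (- y)"
    by (simp add: b_swap[of y] f_minus)
  also have "\<dots> = Sup {a (- x) x' | x'. f x' = - y}"
    using \<open>V_proper a b f\<close> unfolding V_proper_def by blast
  also have "\<dots> = Sup {a (- x') x | x'. f x' = - y}"
    by (simp only: a_swap[of "- x"] minus_minus)
  finally show "b y (f x) = Sup {a x' x | x'. f x' = y}"
    by (simp only: fibre)
qed

theorem proposition5p5:
  fixes tn :: "'v::complete_lattice \<Rightarrow> 'v \<Rightarrow> 'v" and k :: 'v
    and a :: "'x::group_add \<Rightarrow> 'x \<Rightarrow> 'v" and b :: "'y::group_add \<Rightarrow> 'y \<Rightarrow> 'v"
    and f :: "'x \<Rightarrow> 'y"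
  assumes "comm_unital_quantale tn k"
    and "is_frame TYPE('v)"
    and "V_group tn k a" and "V_group tn k b"
    and "V_homomorphism a b f"
  shows "V_open a b f \<longleftrightarrow> V_proper a b f"
proof -
  have a_swap: "\<And>x x'. a x x' = a (- x') (- x)"
    using V_group_minus_swap[OF assms(1,3)] .
  have b_swap: "\<And>y y'. b y y' = b (- y') (- y)"
    using V_group_minus_swap[OF assms(1,4)] .
  have f_minus: "\<And>x. f (- x) = - f x"
    using assms(5) additive_minus unfolding V_homomorphism_def by blast
  have "V_proper a b f \<Longrightarrow> V_open a b f"
    by (rule V_open_if_V_proper_minus_swap[of a b f, OF a_swap b_swap f_minus])
  moreover have "V_proper (\<lambda>x x'. a x' x) (\<lambda>y y'. b y' y) f \<Longrightarrow>
      V_open (\<lambda>x x'. a x' x) (\<lambda>y y'. b y' y) f"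
    by (rule V_open_if_V_proper_minus_swap[of "\<lambda>x x'. a x' x" "\<lambda>y y'. b y' y" f])
      (use a_swap b_swap f_minus in metis)+
  ultimately show ?thesis
    using V_open_iff_V_proper_converse[of a b f]
      V_open_iff_V_proper_converse[of "\<lambda>x x'. a x' x" "\<lambda>y y'. b y' y" f] by auto
qed

end
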